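(* For each positive integer $N$, let $$f(N)=\{\, y\in\mathbb{R} \;:\; y\equiv \sqrt{n} \pmod 1 \text{ for some } n\in\mathbb{N},\ n\le N,\ \sqrt{n}\notin\mathbb{N}\,\},$$ i.e. the set of fractional parts of $\sqrt{n}$ for the non-square $n\le N$, extended periodically with period $1$ to all reals with the same fractional parts. For a set $A\subset\mathbb{R}$ and $x\in\mathbb{R}$ define $$\operatorname{gap}_x(A)=\inf\{y\in A: y>x\}-\sup\{y\in A: y<x\},$$ and set $g(x,N)=\operatorname{gap}_x(f(N))$ and $G(x)=\lim_{N\to\infty}2\sqrt{N}\,g(x,N)$. Then $$G(x)=\begin{cases}2 & x\in\mathbb{Z},\\ \frac{2}{q} & x=\frac{p}{q},\ \gcd(p,q)=1,\ q\ge 2,\ q\equiv 0 \pmod 2,\\ \frac{1}{q} & x=\frac{p}{q},\ \gcd(p,q)=1,\ q\ge 2,\ q\equiv 1 \pmod 2,\\ 0 & x\notin\mathbb{Q}.\end{cases}$$ Equivalently, for $x=p/q$ in lowest terms with $q\ge 2$, $G(p/q)=\gcd(2,q)/q$.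
   Context: $\mathbb{N}$ denotes the positive integers. The fractional part of a real number $t$ is $t-\lfloor t\rfloor$. *)

theory Defs
  imports Complex_Main
begin

definition fset :: "nat \<Rightarrow> real set" where
  "fset N = {y. \<exists>n::nat. 1 \<le> n \<and> n \<le> N \<and> sqrt (real n) \<notin> \<nat> \<and>
                        frac y = frac (sqrt (real n))}"

definition gap :: "real \<Rightarrow> real set \<Rightarrow> real" where
  "gap x A = Inf {y \<in> A. y > x} - Sup {y \<in> A. y < x}"

definition g :: "real \<Rightarrow> nat \<Rightarrow> real" where
  "g x N = gap x (fset N)"

end

(*
  Points of f(N) are y = sqrt n + k with n <= N not a square.

  Rational x = p/q: writing c = p - q k, one has q (y - x) = D / (q sqrt n + c) with
  D = q^2 n - c^2, and for |y - x| < 1 the denominator is at most about 2 q sqrt N.  So the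
  neighbours of x are governed by the smallest positive value a and the largest negative
  value -b of D.  For coprime p and q >= 2 these values of D are exactly the integers
  congruent to -p^2 modulo q gcd(2,q), whence a + b = q gcd(2,q); for q = 1 they are the
  non-zero integers, whence a = b = 1.  Both extremes are attained with c close to
  q sqrt N, so 2 sqrt N times the gap tends to (a + b) / q^2.

  Irrational x: by Kronecker's theorem, in every window of bounded length there is an m
  for which the fractional part of (m + x)^2, or of -(m + x)^2, is positive and
  arbitrarily small.  Taking m + x close to sqrt N / 2 and rounding (m + x)^2 to an
  integer n gives points sqrt n - m on either side of x at distance o(1 / sqrt N).
*)
theory Submission
  imports Defs "HOL-Analysis.Kronecker_Approximation_Theorem"
begin

section \<open>Gaps and the sets f(N)\<close>

lemma gap_le:
  assumes "a \<in> A" "b \<in> A" "a < x" "x < b"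
  shows "gap x A \<le> b - a"
proof -
  have "Inf {y \<in> A. y > x} \<le> b"
    by (rule cInf_lower) (use assms in \<open>auto intro!: bdd_belowI[of _ x]\<close>)
  moreover have "a \<le> Sup {y \<in> A. y < x}"
    by (rule cSup_upper) (use assms in \<open>auto intro!: bdd_aboveI[of _ x]\<close>)
  ultimately show ?thesis
    unfolding gap_def by linarith
qed

lemma gap_ge:
  assumes "a \<in> A" "b \<in> A" "a < x" "x < b"
    and "\<And>y. y \<in> A \<Longrightarrow> x < y \<Longrightarrow> x + u \<le> y"
    and "\<And>y. y \<in> A \<Longrightarrow> y < x \<Longrightarrow> y \<le> x - v"
  shows "u + v \<le> gap x A"
proof -
  have "x + u \<le> Inf {y \<in> A. y > x}"
    by (rule cInf_greatest) (use assms in auto)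
  moreover have "Sup {y \<in> A. y < x} \<le> x - v"
    by (rule cSup_least) (use assms in auto)
  ultimately show ?thesis
    unfolding gap_def by linarith
qed

lemma mem_fset_iff:
  "y \<in> fset N \<longleftrightarrow>
     (\<exists>n k. 1 \<le> n \<and> n \<le> N \<and> sqrt (real n) \<notin> \<nat> \<and> y = sqrt (real n) + of_int k)"
proof
  assume "y \<in> fset N"
  then obtain n where n: "1 \<le> n" "n \<le> N" "sqrt (real n) \<notin> \<nat>" "frac y = frac (sqrt (real n))"
    unfolding fset_def by auto
  then have "y = sqrt (real n) + of_int (\<lfloor>y\<rfloor> - \<lfloor>sqrt (real n)\<rfloor>)"
    unfolding frac_def by simp
  with n show "\<exists>n k. 1 \<le> n \<and> n \<le> N \<and> sqrt (real n) \<notin> \<nat> \<and> y = sqrt (real n) + of_int k"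
    by blast
qed (auto simp: fset_def)

lemma sqrt_diff_eq:
  fixes s t :: real
  assumes "0 \<le> s" "0 < sqrt s + t"
  shows "sqrt s - t = (s - t\<^sup>2) / (sqrt s + t)"
proof -
  have "(sqrt s - t) * (sqrt s + t) = s - t\<^sup>2"
    using assms(1) by (simp add: algebra_simps power2_eq_square)
  with assms(2) show ?thesis
    by (simp add: eq_divide_eq)
qed

section \<open>Irrational points\<close>

lemma frac_diff_mult_small:
  fixes w t :: real
  assumes "0 < t" "t < 1"
  obtains k :: nat where "real k \<le> 1 / t" "0 < frac (w - real k * t)" "frac (w - real k * t) \<le> t"
proof -
  define u where "u = 1 - frac (- w)"
  have u: "0 < u" "u \<le> 1"
    unfolding u_def using frac_lt_1[of "- w"] by auto
  have "w - u \<in> \<int>"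
    unfolding u_def frac_def by simp
  define k where "k = nat (\<lceil>u / t\<rceil> - 1)"
  have "0 < u / t"
    using u assms by simp
  then have k: "real k = of_int \<lceil>u / t\<rceil> - 1"
    unfolding k_def by (simp add: of_nat_nat)
  then have k_bounds: "u / t - 1 \<le> real k" "real k < u / t"
    by linarith+
  then have r: "0 < u - real k * t" "u - real k * t \<le> t"
    using assms by (simp_all add: field_simps)
  have "w - real k * t = (u - real k * t) + (w - u)"
    by simp
  then have "frac (w - real k * t) = frac (u - real k * t)"
    using \<open>w - u \<in> \<int>\<close> by (metis frac_add_int_right)
  also have "\<dots> = u - real k * t"
    using r assms by (simp add: frac_eq)
  finally have fr: "frac (w - real k * t) = u - real k * t" .
  have "u / t \<le> 1 / t"
    using u assms by (simp add: divide_right_mono)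
  then have "real k \<le> 1 / t"
    using k_bounds(2) by linarith
  then show ?thesis
    by (rule that) (use fr r in linarith)+
qed

lemma exists_frac_mult_small:
  fixes \<alpha> \<epsilon> :: real
  assumes "\<alpha> \<notin> \<rat>" "0 < \<epsilon>"
  obtains h :: nat where "0 < h" "0 < frac (real h * \<alpha>)" "frac (real h * \<alpha>) < \<epsilon>"
proof -
  define e where "e = min \<epsilon> 1"
  have "0 \<le> e / 2" "e / 2 \<le> 1" "0 < e / 2"
    using assms(2) by (auto simp: e_def)
  with assms(1) obtain h :: nat where "0 < h" and h: "\<bar>frac (real h * \<alpha>) - e / 2\<bar> < e / 2"
    using Kronecker_approx_1_explicit by blast
  then have "0 < frac (real h * \<alpha>)" "frac (real h * \<alpha>) < \<epsilon>"
    unfolding abs_less_iff e_def by linarith+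
  with \<open>0 < h\<close> show ?thesis
    by (rule that)
qed

lemma frac_irrational_mult_syndetic:
  fixes \<alpha> \<epsilon> :: real
  assumes "\<alpha> \<notin> \<rat>" "0 < \<epsilon>"
  obtains L :: nat where
    "\<And>\<beta> M. \<exists>m::int. M \<le> m \<and> m \<le> M + int L \<and>
       0 < frac (\<beta> + of_int m * \<alpha>) \<and> frac (\<beta> + of_int m * \<alpha>) < \<epsilon>"
proof -
  have "- \<alpha> \<notin> \<rat>"
    using assms(1) by (metis Rats_minus_iff)
  then obtain h :: nat where "0 < h" and t: "0 < frac (real h * - \<alpha>)" "frac (real h * - \<alpha>) < \<epsilon>"
    by (rule exists_frac_mult_small[OF _ assms(2)])
  define t where "t = frac (real h * - \<alpha>)"
  show ?thesis
  proof
    fix \<beta> :: real and M :: int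
    obtain k :: nat where k: "real k \<le> 1 / t"
      and fr: "0 < frac (\<beta> + of_int M * \<alpha> - real k * t)" "frac (\<beta> + of_int M * \<alpha> - real k * t) \<le> t"
      using frac_diff_mult_small[of t] t frac_lt_1 unfolding t_def by blast
    \<comment> \<open>each further step of h shifts the fractional part by exactly -t\<close>
    have "\<beta> + of_int (M + int (k * h)) * \<alpha> =
        (\<beta> + of_int M * \<alpha> - real k * t) + of_int (- int k * \<lfloor>real h * - \<alpha>\<rfloor>)"
      unfolding t_def frac_def by (simp add: algebra_simps)
    then have "frac (\<beta> + of_int (M + int (k * h)) * \<alpha>) = frac (\<beta> + of_int M * \<alpha> - real k * t)"
      by (simp only: frac_add_of_int_right)
    moreover have "real (k * h) \<le> real (nat \<lceil>real h / t\<rceil>)"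
    proof -
      have "real k * real h \<le> 1 / t * real h"
        using k by (intro mult_right_mono) auto
      also have "\<dots> \<le> of_int \<lceil>real h / t\<rceil>"
        by simp
      finally show ?thesis
        using t unfolding t_def[symmetric] by (simp add: of_nat_nat)
    qed
    then have "int (k * h) \<le> int (nat \<lceil>real h / t\<rceil>)"
      by (simp only: of_nat_le_iff)
    ultimately show "\<exists>m::int. M \<le> m \<and> m \<le> M + int (nat \<lceil>real h / t\<rceil>) \<and>
        0 < frac (\<beta> + of_int m * \<alpha>) \<and> frac (\<beta> + of_int m * \<alpha>) < \<epsilon>"
      using fr t unfolding t_def[symmetric] by (intro exI[of _ "M + int (k * h)"]) auto
  qed
qed

lemma exists_nat_near_square:
  fixes t :: real and s :: int
  assumes s: "s \<in> {-1, 1}" and t: "1 \<le> t" "t \<le> sqrt (real N) - 1"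
  obtains n :: nat where "real n = t\<^sup>2 - of_int s * frac (of_int s * t\<^sup>2)" "1 \<le> n" "n \<le> N"
proof -
  define d where "d = frac (of_int s * t\<^sup>2)"
  have "of_int s * of_int s = (1::real)"
    using s by auto
  then have fl: "of_int (s * \<lfloor>of_int s * t\<^sup>2\<rfloor>) = t\<^sup>2 - of_int s * d"
    unfolding d_def frac_def by (simp add: algebra_simps)
  have sd: "\<bar>of_int s * d\<bar> < 1"
    using s frac_lt_1 unfolding d_def by auto
  have "1 \<le> t\<^sup>2"
    using t by (simp add: one_le_power)
  then have "(0::real) < of_int (s * \<lfloor>of_int s * t\<^sup>2\<rfloor>)"
    using fl sd by linarith
  then have pos: "0 < s * \<lfloor>of_int s * t\<^sup>2\<rfloor>"
    by (simp only: of_int_0_less_iff)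
  \<comment> \<open>n is t^2 rounded down for s = 1 and rounded up for s = -1\<close>
  define n where "n = nat (s * \<lfloor>of_int s * t\<^sup>2\<rfloor>)"
  have n: "real n = t\<^sup>2 - of_int s * d"
    unfolding n_def using fl pos by (simp add: of_nat_nat)
  have "t\<^sup>2 \<le> (sqrt (real N) - 1)\<^sup>2"
    using t by (intro power_mono) auto
  also have "\<dots> = real N - 2 * sqrt (real N) + 1"
    by (simp add: power2_eq_square algebra_simps)
  finally have "real n < real N - 2 * sqrt (real N) + 2"
    using n sd by linarith
  then have "n \<le> N"
    using t by simp
  moreover have "1 \<le> n"
    unfolding n_def using pos by simp
  ultimately show ?thesis
    using that n unfolding d_def by blast
qed

lemma exists_nat_sqrt_close:
  fixes t :: real and s :: int
  assumes s: "s \<in> {-1, 1}" and t: "1 \<le> t" "t \<le> sqrt (real N) - 1"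
    and d: "0 < frac (of_int s * t\<^sup>2)"
  obtains n :: nat where "1 \<le> n" "n \<le> N" "0 < of_int s * (t - sqrt (real n))"
    "of_int s * (t - sqrt (real n)) \<le> frac (of_int s * t\<^sup>2) / t"
proof -
  define d where "d = frac (of_int s * t\<^sup>2)"
  obtain n where n: "real n = t\<^sup>2 - of_int s * d" "1 \<le> n" "n \<le> N"
    using exists_nat_near_square[OF s t] unfolding d_def by blast
  have "sqrt (real n) - t = (real n - t\<^sup>2) / (sqrt (real n) + t)"
    using t real_sqrt_ge_zero[of "real n"] by (intro sqrt_diff_eq) (simp, linarith)
  also have "real n - t\<^sup>2 = - (of_int s * d)"
    using n by simp
  finally have "sqrt (real n) - t = - (of_int s * d / (sqrt (real n) + t))"
    by (simp only: minus_divide_left)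
  then have "t - sqrt (real n) = of_int s * d / (sqrt (real n) + t)"
    by linarith
  then have "of_int s * (t - sqrt (real n)) = (of_int s * of_int s) * d / (sqrt (real n) + t)"
    by (simp only: times_divide_eq_right mult.assoc)
  moreover have "of_int s * of_int s = (1::real)"
    using s by auto
  moreover have "0 < d / (sqrt (real n) + t)"
    using d t unfolding d_def by (intro divide_pos_pos add_nonneg_pos) auto
  moreover have "d / (sqrt (real n) + t) \<le> d / t"
    by (rule frac_le) (use d t in \<open>auto simp: d_def\<close>)
  ultimately have "0 < of_int s * (t - sqrt (real n))" "of_int s * (t - sqrt (real n)) \<le> d / t"
    by simp_all
  with n(2,3) show ?thesis
    unfolding d_def by (rule that)
qed

lemma min_frac_le_abs_diff_Ints:
  fixes x :: real
  assumes "k \<in> \<int>"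
  shows "min (frac x) (1 - frac x) \<le> \<bar>x - k\<bar>"
proof -
  obtain j where k: "k = of_int j"
    using assms by (auto elim: Ints_cases)
  have x: "x = of_int \<lfloor>x\<rfloor> + frac x"
    by (simp add: frac_def)
  show ?thesis
  proof (cases "j \<le> \<lfloor>x\<rfloor>")
    case True
    then have "of_int j \<le> (of_int \<lfloor>x\<rfloor> :: real)"
      by simp
    then show ?thesis
      unfolding k using x frac_ge_0[of x] by linarith
  next
    case False
    then have "of_int \<lfloor>x\<rfloor> + 1 \<le> (of_int j :: real)"
      by linarith
    then show ?thesis
      unfolding k using x by linarith
  qed
qed

lemma exists_shifted_sqrt_close:
  fixes x \<epsilon> :: real and s :: int and L N :: nat
  assumes s: "s \<in> {-1, 1}"
    and window: "\<And>M. \<exists>m::int. M \<le> m \<and> m \<le> M + int L \<and>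
       0 < frac (of_int s * (of_int m + x)\<^sup>2) \<and> frac (of_int s * (of_int m + x)\<^sup>2) < \<epsilon>"
    and N: "4 * \<bar>x\<bar> + 2 * real L + 4 \<le> sqrt (real N)"
  obtains m :: int and n :: nat where "1 \<le> n" "n \<le> N" "0 < of_int s * (of_int m + x - sqrt (real n))"
    "of_int s * (of_int m + x - sqrt (real n)) < 2 * \<epsilon> / sqrt (real N)"
proof -
  define M where "M = \<lceil>sqrt (real N) / 2 + \<bar>x\<bar>\<rceil>"
  obtain m :: int where m: "M \<le> m" "m \<le> M + int L"
    and fr: "0 < frac (of_int s * (of_int m + x)\<^sup>2)" "frac (of_int s * (of_int m + x)\<^sup>2) < \<epsilon>"
    using window[of M] by blast
  define t where "t = of_int m + x"
  have "real_of_int M \<le> of_int m" "real_of_int m \<le> of_int M + real L"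
    using m by (simp_all flip: of_int_le_iff)
  then have t: "sqrt (real N) / 2 \<le> t" "t \<le> sqrt (real N) - 1"
    using N ceiling_correct[of "sqrt (real N) / 2 + \<bar>x\<bar>"] abs_ge_self[of x] abs_ge_minus_self[of x]
    unfolding t_def M_def by linarith+
  then have "1 \<le> t" "0 < sqrt (real N)"
    using N abs_ge_zero[of x] by linarith+
  moreover have "0 < frac (of_int s * t\<^sup>2)"
    using fr(1) unfolding t_def .
  ultimately obtain n :: nat where n: "1 \<le> n" "n \<le> N" and pos: "0 < of_int s * (t - sqrt (real n))"
    and le: "of_int s * (t - sqrt (real n)) \<le> frac (of_int s * t\<^sup>2) / t"
    using exists_nat_sqrt_close[OF s _ t(2)] by blast
  have "frac (of_int s * t\<^sup>2) / t < \<epsilon> / (sqrt (real N) / 2)"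
    using fr t \<open>0 < sqrt (real N)\<close> unfolding t_def by (intro frac_less) auto
  also have "\<dots> = 2 * \<epsilon> / sqrt (real N)"
    by simp
  finally have "of_int s * (t - sqrt (real n)) < 2 * \<epsilon> / sqrt (real N)"
    using le by linarith
  with n pos show ?thesis
    unfolding t_def by (rule that)
qed

lemma frac_shifted_square_syndetic:
  fixes x \<epsilon> :: real and s :: int
  assumes x: "x \<notin> \<rat>" and \<epsilon>: "0 < \<epsilon>" and s: "s \<in> {-1, 1}"
  obtains L :: nat where "\<And>M. \<exists>m::int. M \<le> m \<and> m \<le> M + int L \<and>
      0 < frac (of_int s * (of_int m + x)\<^sup>2) \<and> frac (of_int s * (of_int m + x)\<^sup>2) < \<epsilon>"
proof -
  have "2 * of_int s * x \<notin> \<rat>"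
  proof
    assume "2 * of_int s * x \<in> \<rat>"
    then have "(2 * of_int s * x) / (2 * of_int s) \<in> \<rat>"
      by (intro Rats_divide) auto
    then show False
      using x s by auto
  qed
  with \<epsilon> obtain L :: nat where L: "\<And>\<beta> M. \<exists>m::int. M \<le> m \<and> m \<le> M + int L \<and>
      0 < frac (\<beta> + of_int m * (2 * of_int s * x)) \<and> frac (\<beta> + of_int m * (2 * of_int s * x)) < \<epsilon>"
    by (metis frac_irrational_mult_syndetic)
  have "of_int s * (of_int m + x)\<^sup>2 = (of_int s * x\<^sup>2 + of_int m * (2 * of_int s * x)) + of_int (s * m\<^sup>2)"
    for m :: int
    by (simp add: power2_eq_square algebra_simps)
  then have "\<And>M. \<exists>m::int. M \<le> m \<and> m \<le> M + int L \<and>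
      0 < frac (of_int s * (of_int m + x)\<^sup>2) \<and> frac (of_int s * (of_int m + x)\<^sup>2) < \<epsilon>"
    using L by (simp only: frac_add_of_int_right)
  then show ?thesis
    by (rule that)
qed

lemma fset_one_sided_approx_irrational:
  fixes x \<epsilon> :: real and s :: int
  assumes x: "x \<notin> \<rat>" and \<epsilon>: "0 < \<epsilon>" and s: "s \<in> {-1, 1}"
  shows "\<forall>\<^sub>F N in sequentially.
           \<exists>y\<in>fset N. 0 < of_int s * (x - y) \<and> of_int s * (x - y) < \<epsilon> / sqrt (real N)"
proof -
  have "0 < \<epsilon> / 2"
    using \<epsilon> by simp
  then obtain L :: nat where window: "\<And>M. \<exists>m::int. M \<le> m \<and> m \<le> M + int L \<and>
      0 < frac (of_int s * (of_int m + x)\<^sup>2) \<and> frac (of_int s * (of_int m + x)\<^sup>2) < \<epsilon> / 2"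
    using frac_shifted_square_syndetic[OF x _ s] by blast
  define \<delta> where "\<delta> = min (frac x) (1 - frac x)"
  have "x \<notin> \<int>"
    using x Ints_subset_Rats by blast
  then have "0 < \<delta>"
    unfolding \<delta>_def using frac_lt_1[of x] by (simp add: frac_gt_0_iff)
  have "\<forall>\<^sub>F N in sequentially. 4 * \<bar>x\<bar> + 2 * real L + 4 \<le> sqrt (real N)"
    by real_asymp
  moreover have "\<forall>\<^sub>F N in sequentially. \<epsilon> / sqrt (real N) < \<delta>"
    using \<open>0 < \<delta>\<close> by real_asymp
  ultimately show ?thesis
  proof eventually_elim
    case (elim N)
    obtain m :: int and n :: nat where n: "1 \<le> n" "n \<le> N"
      and pos: "0 < of_int s * (of_int m + x - sqrt (real n))"
      and "of_int s * (of_int m + x - sqrt (real n)) < 2 * (\<epsilon> / 2) / sqrt (real N)"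
      by (rule exists_shifted_sqrt_close[OF s window elim(1)])
    then have close: "of_int s * (of_int m + x - sqrt (real n)) < \<epsilon> / sqrt (real N)"
      by simp
    define y where "y = sqrt (real n) + of_int (- m)"
    have xy: "x - y = of_int m + x - sqrt (real n)"
      unfolding y_def by simp
    have "sqrt (real n) \<notin> \<nat>"
    proof
      assume "sqrt (real n) \<in> \<nat>"
      then have "y \<in> \<int>"
        unfolding y_def by (simp add: Nats_subset_Ints[THEN subsetD])
      then have "\<delta> \<le> \<bar>x - y\<bar>"
        unfolding \<delta>_def by (rule min_frac_le_abs_diff_Ints)
      also have "\<bar>x - y\<bar> = of_int s * (of_int m + x - sqrt (real n))"
        using s pos xy by auto
      finally show False
        using close elim(2) by linarith
    qed
    then have "y \<in> fset N"
      unfolding mem_fset_iff y_def using n by blast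
    then show ?case
      using pos close unfolding xy[symmetric] by blast
  qed
qed

lemma tendsto_gap_irrational:
  assumes "x \<notin> \<rat>"
  shows "(\<lambda>N. 2 * sqrt (real N) * g x N) \<longlonglongrightarrow> 0"
  unfolding tendsto_iff dist_real_def
proof (intro allI impI)
  fix e :: real
  assume "0 < e"
  then have "0 < e / 4"
    by simp
  note approx = fset_one_sided_approx_irrational[OF assms this]
  have "\<forall>\<^sub>F N in sequentially. \<exists>y\<in>fset N. 0 < x - y \<and> x - y < e / 4 / sqrt (real N)"
    using approx[of 1] by simp
  moreover have "\<forall>\<^sub>F N in sequentially. \<exists>y\<in>fset N. 0 < y - x \<and> y - x < e / 4 / sqrt (real N)"
    using approx[of "-1"] by simp
  moreover have "\<forall>\<^sub>F N in sequentially. (1::nat) \<le> N"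
    by (rule eventually_ge_at_top)
  ultimately show "\<forall>\<^sub>F N in sequentially. \<bar>2 * sqrt (real N) * g x N - 0\<bar> < e"
  proof eventually_elim
    case (elim N)
    then obtain y\<^sub>1 y\<^sub>2 where y\<^sub>1: "y\<^sub>1 \<in> fset N" "y\<^sub>1 < x" "x - y\<^sub>1 < e / 4 / sqrt (real N)"
      and y\<^sub>2: "y\<^sub>2 \<in> fset N" "x < y\<^sub>2" "y\<^sub>2 - x < e / 4 / sqrt (real N)"
      by auto
    have "0 + 0 \<le> g x N"
      unfolding g_def by (rule gap_ge[OF y\<^sub>1(1) y\<^sub>2(1) y\<^sub>1(2) y\<^sub>2(2)]) auto
    moreover have "g x N \<le> y\<^sub>2 - y\<^sub>1"
      unfolding g_def by (rule gap_le[OF y\<^sub>1(1) y\<^sub>2(1) y\<^sub>1(2) y\<^sub>2(2)])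
    moreover have "0 < sqrt (real N)"
      using elim(3) by simp
    ultimately have "2 * sqrt (real N) * g x N \<le> 2 * sqrt (real N) * (y\<^sub>2 - y\<^sub>1)"
      by simp
    also have "\<dots> < 2 * sqrt (real N) * (2 * (e / 4 / sqrt (real N)))"
      using y\<^sub>1(3) y\<^sub>2(3) \<open>0 < sqrt (real N)\<close> by (intro mult_strict_left_mono) auto
    also have "\<dots> = e"
      using \<open>0 < sqrt (real N)\<close> by simp
    finally show ?case
      using \<open>0 + 0 \<le> g x N\<close> by simp
  qed
qed

section \<open>Rational points\<close>

definition discriminants :: "int \<Rightarrow> int \<Rightarrow> int set" where
  "discriminants p q = {q\<^sup>2 * int n - c\<^sup>2 | n c. sqrt (real n) \<notin> \<nat> \<and> q dvd c - p}"

lemma sq_diff_sq_near: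
  fixes Q z c Z :: real
  assumes Q: "1 \<le> Q" and z: "1 \<le> z" "z \<le> Z" and near: "\<bar>z - c / Q\<bar> < 1"
  shows "sgn (z - c / Q) = sgn ((Q * z)\<^sup>2 - c\<^sup>2)"
    and "\<bar>(Q * z)\<^sup>2 - c\<^sup>2\<bar> \<le> Q\<^sup>2 * (2 * Z + 1) * \<bar>z - c / Q\<bar>"
proof -
  have e: "Q * (z - c / Q) = Q * z - c"
    using Q by (simp add: field_simps)
  have "Q * \<bar>z - c / Q\<bar> < Q * 1"
    using near Q by (intro mult_strict_left_mono) auto
  then have "\<bar>Q * z - c\<bar> < Q"
    using Q unfolding e[symmetric] by (simp add: abs_mult)
  moreover have "Q \<le> Q * z" "Q * z \<le> Q * Z"
    using mult_left_mono[of 1 z Q] mult_left_mono[of z Z Q] Q z by simp_all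
  moreover have "Q * (2 * Z + 1) = 2 * (Q * Z) + Q"
    by (simp add: algebra_simps)
  ultimately have sum: "0 < Q * z + c" "Q * z + c \<le> Q * (2 * Z + 1)"
    using Q unfolding abs_less_iff by linarith+
  have f: "(Q * z)\<^sup>2 - c\<^sup>2 = (Q * z - c) * (Q * z + c)"
    by (simp add: power2_eq_square algebra_simps)
  have "sgn (z - c / Q) = sgn (Q * (z - c / Q))"
    using Q by (simp add: sgn_mult)
  then show "sgn (z - c / Q) = sgn ((Q * z)\<^sup>2 - c\<^sup>2)"
    unfolding e f using sum by (simp add: sgn_mult)
  have "\<bar>(Q * z)\<^sup>2 - c\<^sup>2\<bar> = (Q * \<bar>z - c / Q\<bar>) * (Q * z + c)"
    unfolding f e[symmetric] using Q sum by (simp add: abs_mult)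
  also have "\<dots> \<le> (Q * \<bar>z - c / Q\<bar>) * (Q * (2 * Z + 1))"
    using Q sum by (intro mult_left_mono) auto
  finally show "\<bar>(Q * z)\<^sup>2 - c\<^sup>2\<bar> \<le> Q\<^sup>2 * (2 * Z + 1) * \<bar>z - c / Q\<bar>"
    by (simp add: power2_eq_square mult_ac)
qed

lemma fset_near_rational:
  fixes p q :: int
  assumes q: "1 \<le> q" and y: "y \<in> fset N" and near: "\<bar>y - of_int p / of_int q\<bar> < 1"
  obtains D where "D \<in> discriminants p q" "sgn (y - of_int p / of_int q) = sgn (real_of_int D)"
    "\<bar>of_int D\<bar> \<le> (of_int q)\<^sup>2 * (2 * sqrt (real N) + 1) * \<bar>y - of_int p / of_int q\<bar>"
proof -
  obtain n k where n: "1 \<le> n" "n \<le> N" "sqrt (real n) \<notin> \<nat>" and yk: "y = sqrt (real n) + of_int k"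
    using y unfolding mem_fset_iff by blast
  define c where "c = p - q * k"
  have yx: "y - of_int p / of_int q = sqrt (real n) - of_int c / of_int q"
    using q unfolding yk c_def by (simp add: field_simps)
  have eq: "(of_int q * sqrt (real n))\<^sup>2 - (of_int c)\<^sup>2 = real_of_int (q\<^sup>2 * int n - c\<^sup>2)"
    by (simp add: power_mult_distrib)
  have "q\<^sup>2 * int n - c\<^sup>2 \<in> discriminants p q"
    unfolding discriminants_def c_def using n(3) by fastforce
  moreover have "1 \<le> real_of_int q" "1 \<le> sqrt (real n)" "sqrt (real n) \<le> sqrt (real N)"
    using q n by simp_all
  moreover have "\<bar>sqrt (real n) - of_int c / of_int q\<bar> < 1"
    using near unfolding yx .
  ultimately show ?thesis
    using sq_diff_sq_near[of "of_int q" "sqrt (real n)" "sqrt (real N)" "of_int c"] that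
    unfolding eq yx[symmetric] by blast
qed

lemma sqrt_not_Nats_near_square:
  fixes n :: nat and q c D :: int
  assumes n: "q\<^sup>2 * int n = c\<^sup>2 + D" and D: "D \<noteq> 0" "\<bar>D\<bar> < c"
  shows "sqrt (real n) \<notin> \<nat>"
proof
  assume "sqrt (real n) \<in> \<nat>"
  then obtain m :: nat where "sqrt (real n) = real m"
    by (auto elim: Nats_cases)
  then have "n = m\<^sup>2"
    by (metis of_nat_eq_iff of_nat_power real_sqrt_pow2 of_nat_0_le_iff)
  define s where "s = \<bar>q * int m\<bar>"
  have sq: "c\<^sup>2 + D = s\<^sup>2"
    unfolding s_def power2_abs n[symmetric] \<open>n = m\<^sup>2\<close> by (simp add: power_mult_distrib)
  have lt: "(c - 1)\<^sup>2 < s\<^sup>2" "s\<^sup>2 < (c + 1)\<^sup>2"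
    using D unfolding sq[symmetric] by (simp_all add: power2_eq_square algebra_simps)
  have "0 \<le> s"
    unfolding s_def by simp
  then have "c - 1 < s" "s < c + 1"
    using power_less_imp_less_base[OF lt(1)] power_less_imp_less_base[OF lt(2)] D by simp_all
  then have "s = c"
    by linarith
  with sq D(1) show False
    by simp
qed

lemma sqrt_discriminant_mem_fset:
  fixes p q c D :: int
  assumes q: "1 \<le> q" and cp: "q dvd c - p" and cD: "q\<^sup>2 dvd c\<^sup>2 + D"
    and D: "D \<noteq> 0" "\<bar>D\<bar> < c" and le: "c\<^sup>2 + D \<le> q\<^sup>2 * int N"
  shows "of_int p / of_int q + (sqrt (of_int (c\<^sup>2 + D)) - of_int c) / of_int q \<in> fset N"
proof -
  obtain n' where n': "c\<^sup>2 + D = q\<^sup>2 * n'"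
    using cD by (auto elim: dvdE)
  have "c * 1 \<le> c * c"
    using D by (intro mult_left_mono) auto
  then have "0 < q\<^sup>2 * n'"
    using D unfolding n'[symmetric] by (simp add: power2_eq_square)
  then have "0 < n'"
    using q by (simp add: zero_less_mult_iff)
  define n where "n = nat n'"
  have n: "q\<^sup>2 * int n = c\<^sup>2 + D"
    unfolding n_def using n' \<open>0 < n'\<close> by simp
  have "1 \<le> n"
    unfolding n_def using \<open>0 < n'\<close> by simp
  have "n \<le> N"
    using le q unfolding n[symmetric] by simp
  have sqrt_n: "sqrt (real n) = sqrt (of_int (c\<^sup>2 + D)) / of_int q"
  proof -
    have "real n = of_int (c\<^sup>2 + D) / (of_int q)\<^sup>2"
      using q unfolding n[symmetric] by simp
    then show ?thesis
      using q by (simp add: real_sqrt_divide)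
  qed
  obtain j where j: "c - p = q * j"
    using cp by (auto elim: dvdE)
  have "sqrt (real n) \<notin> \<nat>"
    using sqrt_not_Nats_near_square[OF n D] .
  moreover have "of_int p / of_int q + (sqrt (of_int (c\<^sup>2 + D)) - of_int c) / of_int q =
      sqrt (real n) + of_int (- j)"
    unfolding sqrt_n using q arg_cong[OF j, of real_of_int] by (simp add: field_simps)
  ultimately show ?thesis
    unfolding mem_fset_iff using \<open>1 \<le> n\<close> \<open>n \<le> N\<close> by blast
qed

lemma sqrt_mult_sqrt_sq_add_minus_eq:
  fixes u D s :: real
  assumes s: "0 < s" and u: "0 < u" and uD: "0 < u\<^sup>2 + D"
  shows "s * (sqrt (u\<^sup>2 + D) - u) = D / (sqrt ((u / s)\<^sup>2 + D / s\<^sup>2) + u / s)"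
proof -
  have "sqrt ((u / s)\<^sup>2 + D / s\<^sup>2) = sqrt (u\<^sup>2 + D) / s"
    using s by (simp add: power_divide add_divide_distrib[symmetric] real_sqrt_divide)
  moreover have RC: "0 < sqrt (u\<^sup>2 + D) + u"
    using u uD by (simp add: add_nonneg_pos)
  moreover have "sqrt (u\<^sup>2 + D) - u = D / (sqrt (u\<^sup>2 + D) + u)"
    using sqrt_diff_eq[of "u\<^sup>2 + D" u] uD RC by simp
  ultimately show ?thesis
    using s by (simp add: field_simps)
qed

lemma tendsto_sqrt_mult_sqrt_sq_add_minus:
  fixes c :: "nat \<Rightarrow> real" and D l :: real
  assumes c: "(\<lambda>N. c N / sqrt (real N)) \<longlonglongrightarrow> l" and l: "0 < l"
  shows "(\<lambda>N. sqrt (real N) * (sqrt ((c N)\<^sup>2 + D) - c N)) \<longlonglongrightarrow> D / (2 * l)"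
proof -
  have "(\<lambda>N. D / real N) \<longlonglongrightarrow> 0"
    by real_asymp
  then have r: "(\<lambda>N. (c N / sqrt (real N))\<^sup>2 + D / real N) \<longlonglongrightarrow> l\<^sup>2"
    using tendsto_add[OF tendsto_power[OF c, of 2]] by fastforce
  have "(\<lambda>N. D / (sqrt ((c N / sqrt (real N))\<^sup>2 + D / real N) + c N / sqrt (real N)))
      \<longlonglongrightarrow> D / (sqrt (l\<^sup>2) + l)"
    using l by (intro tendsto_divide tendsto_add tendsto_const tendsto_real_sqrt[OF r] c) auto
  then have lim: "(\<lambda>N. D / (sqrt ((c N / sqrt (real N))\<^sup>2 + D / real N) + c N / sqrt (real N)))
      \<longlonglongrightarrow> D / (2 * l)"
    using l by simp
  have "\<forall>\<^sub>F N in sequentially. 0 < c N / sqrt (real N)"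
    using c l by (rule order_tendstoD)
  moreover have "\<forall>\<^sub>F N in sequentially. 0 < (c N / sqrt (real N))\<^sup>2 + D / real N"
    using order_tendstoD(1)[OF r, of 0] l by simp
  moreover have "\<forall>\<^sub>F N in sequentially. 0 < N"
    by (rule eventually_gt_at_top)
  ultimately have "\<forall>\<^sub>F N in sequentially.
      D / (sqrt ((c N / sqrt (real N))\<^sup>2 + D / real N) + c N / sqrt (real N)) =
      sqrt (real N) * (sqrt ((c N)\<^sup>2 + D) - c N)"
  proof eventually_elim
    case (elim N)
    then have "0 < sqrt (real N)" "0 < c N" "0 < (c N)\<^sup>2 + D"
      by (simp_all add: zero_less_divide_iff power_divide add_divide_distrib[symmetric])
    then show ?case
      using sqrt_mult_sqrt_sq_add_minus_eq[of "sqrt (real N)" "c N" D] by simp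
  qed
  with lim show ?thesis
    by (rule Lim_transform_eventually)
qed

lemma exists_dvd_diff_between:
  fixes m c\<^sub>0 :: int and t :: real
  assumes "0 < m"
  obtains c where "m dvd c - c\<^sub>0" "t - of_int m < of_int c" "of_int c \<le> t"
proof
  define k where "k = \<lfloor>(t - of_int c\<^sub>0) / of_int m\<rfloor>"
  show "m dvd (c\<^sub>0 + m * k) - c\<^sub>0"
    by simp
  have "of_int k \<le> (t - of_int c\<^sub>0) / of_int m" "(t - of_int c\<^sub>0) / of_int m < of_int k + 1"
    unfolding k_def by linarith+
  then show "t - of_int m < of_int (c\<^sub>0 + m * k)" "of_int (c\<^sub>0 + m * k) \<le> t"
    using assms by (simp_all add: field_simps)
qed

lemma exists_cong_seq_sqrt:
  fixes m c\<^sub>0 D :: int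
  assumes m: "0 < m"
  obtains c :: "nat \<Rightarrow> int" where "\<And>N. m dvd c N - c\<^sub>0"
    "\<forall>\<^sub>F N in sequentially. \<bar>D\<bar> < c N \<and> (c N)\<^sup>2 + D \<le> m * int N"
    "(\<lambda>N. of_int (c N) / sqrt (real N)) \<longlonglongrightarrow> sqrt (of_int m)"
proof -
  define M where "M = (of_int m :: real)"
  have "0 < M"
    using m unfolding M_def by simp
  define T where "T N = sqrt (M * real N - of_int D)" for N
  have "\<exists>c. m dvd c - c\<^sub>0 \<and> T N - M < of_int c \<and> of_int c \<le> T N" for N
    using exists_dvd_diff_between[OF m] unfolding M_def by metis
  then obtain c :: "nat \<Rightarrow> int" where c: "\<And>N. m dvd c N - c\<^sub>0"
    and c_between: "\<And>N. T N - M < of_int (c N)" "\<And>N. of_int (c N) \<le> T N"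
    by metis
  have "filterlim (\<lambda>N. T N - M) at_top sequentially"
    unfolding T_def using \<open>0 < M\<close> by real_asymp
  then have "filterlim (\<lambda>N. real_of_int (c N)) at_top sequentially"
    by (rule filterlim_at_top_mono) (use c_between(1) in \<open>auto intro: always_eventually less_imp_le\<close>)
  then have "\<forall>\<^sub>F N in sequentially. real_of_int \<bar>D\<bar> < of_int (c N)"
    by (simp add: filterlim_at_top_dense)
  then have "\<forall>\<^sub>F N in sequentially. \<bar>D\<bar> < c N \<and> (c N)\<^sup>2 + D \<le> m * int N"
  proof eventually_elim
    case (elim N)
    then have "0 < T N"
      using c_between(2)[of N] by linarith
    then have "0 < M * real N - of_int D"
      unfolding T_def by simp
    have "(of_int (c N))\<^sup>2 \<le> (T N)\<^sup>2"
      using c_between(2)[of N] elim by (intro power_mono) auto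
    also have "(T N)\<^sup>2 = M * real N - of_int D"
      unfolding T_def using \<open>0 < M * real N - of_int D\<close> by simp
    finally have "real_of_int ((c N)\<^sup>2 + D) \<le> of_int (m * int N)"
      unfolding M_def by simp
    then show ?case
      using elim by (simp only: of_int_le_iff of_int_less_iff)
  qed
  moreover have "(\<lambda>N. of_int (c N) / sqrt (real N)) \<longlonglongrightarrow> sqrt M"
  proof (rule tendsto_sandwich)
    show "(\<lambda>N. (T N - M) / sqrt (real N)) \<longlonglongrightarrow> sqrt M" "(\<lambda>N. T N / sqrt (real N)) \<longlonglongrightarrow> sqrt M"
      unfolding T_def using \<open>0 < M\<close> by (real_asymp simp: powr_half_sqrt)+
    show "\<forall>\<^sub>F N in sequentially. (T N - M) / sqrt (real N) \<le> of_int (c N) / sqrt (real N)"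
      "\<forall>\<^sub>F N in sequentially. of_int (c N) / sqrt (real N) \<le> T N / sqrt (real N)"
      using c_between by (simp_all add: divide_right_mono less_imp_le)
  qed
  ultimately show ?thesis
    using that c unfolding M_def by blast
qed

lemma fset_approach_rational:
  fixes p q c\<^sub>0 D :: int
  assumes q: "1 \<le> q" and c\<^sub>0: "q dvd c\<^sub>0 - p" "q\<^sup>2 dvd c\<^sub>0\<^sup>2 + D" and D: "D \<noteq> 0"
  obtains y :: "nat \<Rightarrow> real" where "\<forall>\<^sub>F N in sequentially. y N \<in> fset N"
    "(\<lambda>N. 2 * sqrt (real N) * (y N - of_int p / of_int q)) \<longlonglongrightarrow> of_int D / (of_int q)\<^sup>2"
proof -
  obtain c :: "nat \<Rightarrow> int" where c: "\<And>N. q\<^sup>2 dvd c N - c\<^sub>0"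
    and ev: "\<forall>\<^sub>F N in sequentially. \<bar>D\<bar> < c N \<and> (c N)\<^sup>2 + D \<le> q\<^sup>2 * int N"
    and lim: "(\<lambda>N. of_int (c N) / sqrt (real N)) \<longlonglongrightarrow> sqrt (of_int (q\<^sup>2))"
    using exists_cong_seq_sqrt[of "q\<^sup>2"] q by auto
  have cp: "q dvd c N - p" for N
  proof -
    have "q dvd c N - c\<^sub>0"
      using c[of N] by (rule dvd_trans[rotated]) (simp add: power2_eq_square)
    then show ?thesis
      using c\<^sub>0(1) by (metis dvd_add diff_add_cancel add_diff_eq)
  qed
  have cD: "q\<^sup>2 dvd (c N)\<^sup>2 + D" for N
  proof -
    have "(c N)\<^sup>2 + D = (c\<^sub>0\<^sup>2 + D) + (c N - c\<^sub>0) * (c N + c\<^sub>0)"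
      by (simp add: power2_eq_square algebra_simps)
    then show ?thesis
      by (simp only:) (intro dvd_add c\<^sub>0(2) dvd_mult2 c)
  qed
  define y where "y N = of_int p / of_int q + (sqrt (of_int ((c N)\<^sup>2 + D)) - of_int (c N)) / of_int q" for N
  have "\<forall>\<^sub>F N in sequentially. y N \<in> fset N"
    using ev unfolding y_def by eventually_elim (use sqrt_discriminant_mem_fset q cp cD D in blast)
  moreover have "(\<lambda>N. 2 * sqrt (real N) * (y N - of_int p / of_int q)) \<longlonglongrightarrow> of_int D / (of_int q)\<^sup>2"
  proof -
    have "(\<lambda>N. 2 / of_int q * (sqrt (real N) * (sqrt ((of_int (c N))\<^sup>2 + of_int D) - of_int (c N))))
        \<longlonglongrightarrow> 2 / of_int q * (of_int D / (2 * of_int q))"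
      using lim q by (intro tendsto_mult tendsto_const tendsto_sqrt_mult_sqrt_sq_add_minus) auto
    moreover have "2 * sqrt (real N) * (y N - of_int p / of_int q) =
        2 / of_int q * (sqrt (real N) * (sqrt ((of_int (c N))\<^sup>2 + of_int D) - of_int (c N)))" for N
      unfolding y_def by simp
    moreover have "2 / of_int q * (of_int D / (2 * of_int q)) = of_int D / (of_int q :: real)\<^sup>2"
      by (simp add: power2_eq_square)
    ultimately show ?thesis
      by (simp only:)
  qed
  ultimately show ?thesis
    using that by blast
qed

lemma fset_dist_rational_ge:
  fixes p q a b :: int
  assumes q: "1 \<le> q" and ab: "0 < a" "0 < b" "a \<le> q\<^sup>2" "b \<le> q\<^sup>2"
    and sep: "discriminants p q \<inter> {-b<..<a} = {}"
    and y: "y \<in> fset N" "y \<noteq> of_int p / of_int q"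
  shows "of_int (if of_int p / of_int q < y then a else b)
           \<le> (of_int q)\<^sup>2 * (2 * sqrt (real N) + 1) * \<bar>y - of_int p / of_int q\<bar>"
proof (cases "1 \<le> \<bar>y - of_int p / of_int q\<bar>")
  case True
  have "of_int (if of_int p / of_int q < y then a else b) \<le> (of_int q :: real)\<^sup>2 * 1 * 1"
    using ab by (simp flip: of_int_power)
  also have "\<dots> \<le> (of_int q)\<^sup>2 * (2 * sqrt (real N) + 1) * \<bar>y - of_int p / of_int q\<bar>"
    using True by (intro mult_mono) auto
  finally show ?thesis .
next
  case False
  then obtain D where D: "D \<in> discriminants p q" "sgn (y - of_int p / of_int q) = sgn (real_of_int D)"
    "\<bar>of_int D\<bar> \<le> (of_int q)\<^sup>2 * (2 * sqrt (real N) + 1) * \<bar>y - of_int p / of_int q\<bar>"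
    using fset_near_rational[OF q y(1)] by (metis not_le)
  have "D \<notin> {-b<..<a}"
    using sep D(1) by blast
  then have "if of_int p / of_int q < y then a \<le> D else b \<le> - D"
    using D(2) y(2) ab(1,2) by (auto simp: sgn_if split: if_splits)
  then have "of_int (if of_int p / of_int q < y then a else b) \<le> \<bar>real_of_int D\<bar>"
    by (auto split: if_splits)
  with D(3) show ?thesis
    by linarith
qed

lemma gap_rational_ge:
  fixes p q a b :: int
  assumes q: "1 \<le> q" and ab: "0 < a" "0 < b" "a \<le> q\<^sup>2" "b \<le> q\<^sup>2"
    and sep: "discriminants p q \<inter> {-b<..<a} = {}"
    and y: "y\<^sub>1 \<in> fset N" "y\<^sub>2 \<in> fset N" "y\<^sub>1 < of_int p / of_int q" "of_int p / of_int q < y\<^sub>2"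
  shows "of_int (a + b) / ((of_int q)\<^sup>2 * (2 * sqrt (real N) + 1)) \<le> g (of_int p / of_int q) N"
proof -
  define x where "x = of_int p / (of_int q :: real)"
  define W where "W = (of_int q)\<^sup>2 * (2 * sqrt (real N) + 1)"
  have "0 < W"
    unfolding W_def using q by (simp add: add_nonneg_pos)
  have bound: "of_int (if x < y then a else b) \<le> W * \<bar>y - x\<bar>" if "y \<in> fset N" "y \<noteq> x" for y
    using fset_dist_rational_ge[OF q ab sep that[unfolded x_def]] unfolding x_def W_def .
  have "of_int a / W + of_int b / W \<le> g x N"
    unfolding g_def
  proof (rule gap_ge[OF y[folded x_def]])
    fix y
    assume "y \<in> fset N" "x < y"
    then show "x + of_int a / W \<le> y"
      using bound[of y] \<open>0 < W\<close> by (simp add: field_simps)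
  next
    fix y
    assume "y \<in> fset N" "y < x"
    then show "y \<le> x - of_int b / W"
      using bound[of y] \<open>0 < W\<close> by (simp add: field_simps)
  qed
  then show ?thesis
    unfolding x_def W_def by (simp add: add_divide_distrib)
qed

lemma fset_two_sided_approach_rational:
  fixes p q a b c\<^sub>a c\<^sub>b :: int
  assumes q: "1 \<le> q" and ab: "0 < a" "0 < b"
    and c\<^sub>a: "q dvd c\<^sub>a - p" "q\<^sup>2 dvd c\<^sub>a\<^sup>2 + a"
    and c\<^sub>b: "q dvd c\<^sub>b - p" "q\<^sup>2 dvd c\<^sub>b\<^sup>2 - b"
  obtains y\<^sub>1 y\<^sub>2 :: "nat \<Rightarrow> real" where
    "\<forall>\<^sub>F N in sequentially. y\<^sub>1 N \<in> fset N \<and> y\<^sub>2 N \<in> fset N \<and>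
       y\<^sub>1 N < of_int p / of_int q \<and> of_int p / of_int q < y\<^sub>2 N"
    "(\<lambda>N. 2 * sqrt (real N) * (y\<^sub>2 N - y\<^sub>1 N)) \<longlonglongrightarrow> of_int (a + b) / (of_int q)\<^sup>2"
proof -
  define x where "x = of_int p / (of_int q :: real)"
  obtain y\<^sub>2 where y\<^sub>2: "\<forall>\<^sub>F N in sequentially. y\<^sub>2 N \<in> fset N"
    and lim\<^sub>2: "(\<lambda>N. 2 * sqrt (real N) * (y\<^sub>2 N - x)) \<longlonglongrightarrow> of_int a / (of_int q)\<^sup>2"
    using fset_approach_rational[OF q c\<^sub>a] ab unfolding x_def by auto
  obtain y\<^sub>1 where y\<^sub>1: "\<forall>\<^sub>F N in sequentially. y\<^sub>1 N \<in> fset N"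
    and lim\<^sub>1: "(\<lambda>N. 2 * sqrt (real N) * (y\<^sub>1 N - x)) \<longlonglongrightarrow> of_int (- b) / (of_int q)\<^sup>2"
    using fset_approach_rational[OF q c\<^sub>b(1), of "- b"] c\<^sub>b(2) ab unfolding x_def by auto
  have "\<forall>\<^sub>F N in sequentially. 0 < 2 * sqrt (real N) * (y\<^sub>2 N - x)"
    using lim\<^sub>2 by (rule order_tendstoD) (use ab q in simp)
  moreover have "\<forall>\<^sub>F N in sequentially. 2 * sqrt (real N) * (y\<^sub>1 N - x) < 0"
    using lim\<^sub>1 by (rule order_tendstoD) (use ab q in simp)
  ultimately have "\<forall>\<^sub>F N in sequentially. y\<^sub>1 N \<in> fset N \<and> y\<^sub>2 N \<in> fset N \<and> y\<^sub>1 N < x \<and> x < y\<^sub>2 N"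
    using y\<^sub>1 y\<^sub>2 by eventually_elim (simp add: zero_less_mult_iff mult_less_0_iff)
  moreover have "(\<lambda>N. 2 * sqrt (real N) * (y\<^sub>2 N - x) - 2 * sqrt (real N) * (y\<^sub>1 N - x))
      \<longlonglongrightarrow> of_int (a + b) / (of_int q)\<^sup>2"
    using tendsto_diff[OF lim\<^sub>2 lim\<^sub>1] by (simp add: diff_divide_distrib add_divide_distrib)
  then have "(\<lambda>N. 2 * sqrt (real N) * (y\<^sub>2 N - y\<^sub>1 N)) \<longlonglongrightarrow> of_int (a + b) / (of_int q)\<^sup>2"
    by (simp add: algebra_simps)
  ultimately show ?thesis
    using that unfolding x_def by blast
qed

lemma tendsto_gap_rational:
  fixes p q a b c\<^sub>a c\<^sub>b :: int
  assumes q: "1 \<le> q" and ab: "0 < a" "0 < b" "a \<le> q\<^sup>2" "b \<le> q\<^sup>2"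
    and sep: "discriminants p q \<inter> {-b<..<a} = {}"
    and c\<^sub>a: "q dvd c\<^sub>a - p" "q\<^sup>2 dvd c\<^sub>a\<^sup>2 + a"
    and c\<^sub>b: "q dvd c\<^sub>b - p" "q\<^sup>2 dvd c\<^sub>b\<^sup>2 - b"
  shows "(\<lambda>N. 2 * sqrt (real N) * g (of_int p / of_int q) N) \<longlonglongrightarrow> of_int (a + b) / (of_int q)\<^sup>2"
proof -
  define K where "K = (of_int (a + b) / (of_int q)\<^sup>2 :: real)"
  obtain y\<^sub>1 y\<^sub>2 where ev: "\<forall>\<^sub>F N in sequentially. y\<^sub>1 N \<in> fset N \<and> y\<^sub>2 N \<in> fset N \<and>
      y\<^sub>1 N < of_int p / of_int q \<and> of_int p / of_int q < y\<^sub>2 N"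
    and upper: "(\<lambda>N. 2 * sqrt (real N) * (y\<^sub>2 N - y\<^sub>1 N)) \<longlonglongrightarrow> K"
    using fset_two_sided_approach_rational[OF q ab(1,2) c\<^sub>a c\<^sub>b] unfolding K_def by blast
  have "(\<lambda>N. 2 * sqrt (real N) / (2 * sqrt (real N) + 1)) \<longlonglongrightarrow> 1"
    by real_asymp
  then have "(\<lambda>N. K * (2 * sqrt (real N) / (2 * sqrt (real N) + 1))) \<longlonglongrightarrow> K * 1"
    by (intro tendsto_mult tendsto_const)
  then have lower: "(\<lambda>N. 2 * sqrt (real N) * (of_int (a + b) / ((of_int q)\<^sup>2 * (2 * sqrt (real N) + 1))))
      \<longlonglongrightarrow> K"
    unfolding K_def by (simp add: field_simps)
  show ?thesis
    unfolding K_def[symmetric]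
  proof (rule tendsto_sandwich[OF _ _ lower upper])
    show "\<forall>\<^sub>F N in sequentially. 2 * sqrt (real N) * (of_int (a + b) / ((of_int q)\<^sup>2 * (2 * sqrt (real N) + 1)))
        \<le> 2 * sqrt (real N) * g (of_int p / of_int q) N"
      using ev
    proof eventually_elim
      case (elim N)
      then have "of_int (a + b) / ((of_int q)\<^sup>2 * (2 * sqrt (real N) + 1)) \<le> g (of_int p / of_int q) N"
        by (intro gap_rational_ge[OF q ab sep, of "y\<^sub>1 N" N "y\<^sub>2 N"]) auto
      then show ?case
        by (rule mult_left_mono) simp
    qed
    show "\<forall>\<^sub>F N in sequentially. 2 * sqrt (real N) * g (of_int p / of_int q) N
        \<le> 2 * sqrt (real N) * (y\<^sub>2 N - y\<^sub>1 N)"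
      using ev unfolding g_def by eventually_elim (intro mult_left_mono gap_le; simp)
  qed
qed

lemma discriminants_mod:
  assumes "D \<in> discriminants p q"
  shows "D mod (q * gcd 2 q) = (- p\<^sup>2) mod (q * gcd 2 q)"
proof -
  obtain n m where D: "D = q\<^sup>2 * int n - (p + q * m)\<^sup>2"
    using assms unfolding discriminants_def by (auto elim!: dvdE simp: algebra_simps)
  have "D - (- p\<^sup>2) = q * (q * (int n - m\<^sup>2) - 2 * p * m)"
    unfolding D by (simp add: power2_eq_square algebra_simps)
  moreover have "gcd 2 q dvd q * (int n - m\<^sup>2) - 2 * p * m"
    by (intro dvd_diff dvd_mult2) simp_all
  ultimately show ?thesis
    by (simp add: mod_eq_dvd_iff)
qed

lemma discriminant_realizable:
  fixes p q D :: int
  assumes "coprime p q" and "D mod (q * gcd 2 q) = (- p\<^sup>2) mod (q * gcd 2 q)"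
  shows "\<exists>c. q dvd c - p \<and> q\<^sup>2 dvd c\<^sup>2 + D"
proof -
  obtain t where t: "D + p\<^sup>2 = q * gcd 2 q * t"
    using assms(2) unfolding mod_eq_dvd_iff by (auto elim!: dvdE)
  have "gcd (2 * p) q = gcd 2 q"
    by (rule gcd_mult_left_right_cancel) (use assms(1) in \<open>simp add: coprime_commute\<close>)
  then obtain u v where uv: "u * (2 * p) + v * q = gcd 2 q"
    using bezout_int[of "2 * p" q] by metis
  define c where "c = p - q * t * u"
  have "c\<^sup>2 + D = q * gcd 2 q * t - 2 * p * q * t * u + q\<^sup>2 * t\<^sup>2 * u\<^sup>2"
    using t unfolding c_def by (simp add: power2_eq_square algebra_simps)
  also have "\<dots> = q\<^sup>2 * (t * v + t\<^sup>2 * u\<^sup>2)"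
    unfolding uv[symmetric] by (simp add: power2_eq_square algebra_simps)
  finally have "q\<^sup>2 dvd c\<^sup>2 + D"
    by simp
  moreover have "q dvd c - p"
    unfolding c_def by simp
  ultimately show ?thesis
    by blast
qed

lemma int_mod_not_between:
  fixes D r :: int
  assumes "0 < r"
  shows "D \<notin> {D mod r - r<..<D mod r}"
proof -
  have D: "D = r * (D div r) + D mod r"
    by simp
  consider "D div r \<le> -1" | "0 \<le> D div r"
    by linarith
  then show ?thesis
  proof cases
    case 1
    then have "r * (D div r) \<le> r * -1"
      using assms by (intro mult_left_mono) auto
    then have "D \<le> D mod r - r"
      using D by linarith
    then show ?thesis
      by simp
  next
    case 2
    then have "0 \<le> r * (D div r)"
      using assms by simp
    then have "D mod r \<le> D"
      using D by linarith
    then show ?thesis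
      by simp
  qed
qed

lemma tendsto_gap_coprime:
  fixes p q :: int
  assumes cop: "coprime p q" and q: "2 \<le> q"
  shows "(\<lambda>N. 2 * sqrt (real N) * g (of_int p / of_int q) N) \<longlonglongrightarrow> of_int (gcd 2 q) / of_int q"
proof -
  define r where "r = q * gcd 2 q"
  define a where "a = (- p\<^sup>2) mod r"
  define b where "b = r - a"
  have "0 < gcd 2 q" "gcd 2 q \<le> 2"
    using q by (simp_all add: zdvd_imp_le)
  then have r: "0 < r" "r \<le> q\<^sup>2"
    unfolding r_def using q by (simp_all add: power2_eq_square mult_left_mono)
  have "a \<noteq> 0"
  proof
    assume "a = 0"
    then have "q dvd p\<^sup>2"
      unfolding a_def r_def by (auto simp: mod_eq_0_iff_dvd intro: dvd_mult_left)
    moreover have "coprime (p\<^sup>2) q"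
      using cop by (simp add: coprime_power_left_iff)
    ultimately have "is_unit q"
      by (intro coprime_common_divisor[OF _ _ dvd_refl])
    then show False
      using q by simp
  qed
  moreover have "0 \<le> a" "a < r"
    unfolding a_def using r(1) by simp_all
  ultimately have ab: "0 < a" "0 < b" "a \<le> q\<^sup>2" "b \<le> q\<^sup>2"
    using r unfolding b_def by auto
  have "D \<notin> {-b<..<a}" if "D \<in> discriminants p q" for D
    using int_mod_not_between[OF r(1), of D] discriminants_mod[OF that]
    unfolding a_def b_def r_def by simp
  then have "discriminants p q \<inter> {-b<..<a} = {}"
    by blast
  moreover obtain c\<^sub>a where "q dvd c\<^sub>a - p" "q\<^sup>2 dvd c\<^sub>a\<^sup>2 + a"
    using discriminant_realizable[OF cop, of a] unfolding a_def r_def by auto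
  moreover obtain c\<^sub>b where "q dvd c\<^sub>b - p" "q\<^sup>2 dvd c\<^sub>b\<^sup>2 + - b"
    using discriminant_realizable[OF cop, of "- b"] unfolding b_def a_def r_def by auto
  ultimately have "(\<lambda>N. 2 * sqrt (real N) * g (of_int p / of_int q) N) \<longlonglongrightarrow> of_int (a + b) / (of_int q)\<^sup>2"
    using q ab by (intro tendsto_gap_rational) simp_all
  moreover have "of_int (a + b) / (of_int q)\<^sup>2 = (of_int (gcd 2 q) / of_int q :: real)"
    using q unfolding b_def r_def by (simp add: power2_eq_square)
  ultimately show ?thesis
    by simp
qed

lemma tendsto_gap_int:
  "(\<lambda>N. 2 * sqrt (real N) * g (of_int p) N) \<longlonglongrightarrow> 2"
proof -
  have "D \<notin> {-1<..<1}" if mem: "D \<in> discriminants p 1" for D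
  proof
    assume "D \<in> {-1<..<1}"
    obtain n c where D: "D = 1\<^sup>2 * int n - c\<^sup>2" and n: "sqrt (real n) \<notin> \<nat>"
      using mem unfolding discriminants_def by blast
    have "D = 0"
      using \<open>D \<in> {-1<..<1}\<close> by simp
    then have "int n = c\<^sup>2"
      using D by simp
    then have "real n = of_int (c\<^sup>2)"
      by (metis of_int_of_nat_eq)
    then have "real n = (of_int \<bar>c\<bar>)\<^sup>2"
      by simp
    then have "sqrt (real n) = of_nat (nat \<bar>c\<bar>)"
      by simp
    with n show False
      by (metis of_nat_in_Nats)
  qed
  then have "discriminants p 1 \<inter> {-1<..<1} = {}"
    by blast
  then have "(\<lambda>N. 2 * sqrt (real N) * g (of_int p / of_int 1) N) \<longlonglongrightarrow> of_int (1 + 1) / (of_int 1)\<^sup>2"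
    by (intro tendsto_gap_rational[where c\<^sub>a = p and c\<^sub>b = p]) auto
  then show ?thesis
    by simp
qed

theorem mainTheorem1:
  fixes x :: real
  shows "(x \<in> \<int> \<longrightarrow> (\<lambda>N. 2 * sqrt (real N) * g x N) \<longlonglongrightarrow> 2)
       \<and> (\<forall>p q :: int. coprime p q \<and> q \<ge> 2 \<and> even q \<and> x = of_int p / of_int q \<longrightarrow>
            (\<lambda>N. 2 * sqrt (real N) * g x N) \<longlonglongrightarrow> 2 / of_int q)
       \<and> (\<forall>p q :: int. coprime p q \<and> q \<ge> 2 \<and> odd q \<and> x = of_int p / of_int q \<longrightarrow>
            (\<lambda>N. 2 * sqrt (real N) * g x N) \<longlonglongrightarrow> 1 / of_int q)
       \<and> (x \<notin> \<rat> \<longrightarrow> (\<lambda>N. 2 * sqrt (real N) * g x N) \<longlonglongrightarrow> 0)"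
proof (intro conjI allI impI)
  assume "x \<in> \<int>"
  then show "(\<lambda>N. 2 * sqrt (real N) * g x N) \<longlonglongrightarrow> 2"
    using tendsto_gap_int by (auto elim: Ints_cases)
next
  fix p q :: int
  assume "coprime p q \<and> q \<ge> 2 \<and> even q \<and> x = of_int p / of_int q"
  moreover from this have "gcd 2 q = 2"
    by (simp add: gcd_proj1_if_dvd)
  ultimately show "(\<lambda>N. 2 * sqrt (real N) * g x N) \<longlonglongrightarrow> 2 / of_int q"
    using tendsto_gap_coprime[of p q] by simp
next
  fix p q :: int
  assume "coprime p q \<and> q \<ge> 2 \<and> odd q \<and> x = of_int p / of_int q"
  moreover from this have "gcd 2 q = 1"
    by (simp add: coprime_left_2_iff_odd flip: coprime_iff_gcd_eq_1)
  ultimately show "(\<lambda>N. 2 * sqrt (real N) * g x N) \<longlonglongrightarrow> 1 / of_int q"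
    using tendsto_gap_coprime[of p q] by simp
next
  assume "x \<notin> \<rat>"
  then show "(\<lambda>N. 2 * sqrt (real N) * g x N) \<longlonglongrightarrow> 0"
    by (rule tendsto_gap_irrational)
qed

end
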